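(* Let $n_1,\dots,n_N\ge1$, $n=\sum_{i=1}^Nn_i$, and $\epsilon_i>0$ for $i=1,\dots,N$. Let $p_c:\mathbb R^n\to\mathbb R$ be the density of the uniform distribution on $\prod_{i=1}^NC_{n_i}(0,\epsilon_i)$, i.e. $p_c(z)=\frac{1}{2^n\prod_{i=1}^N\epsilon_i^{n_i}}$ for $z\in\prod_{i=1}^NC_{n_i}(0,\epsilon_i)$ and $p_c(z)=0$ otherwise. Then for all $x,y\in\mathbb R^n$, $$\int_{\mathbb R^n}|p_c(u-x)-p_c(u-y)|\,du\le\frac{\sqrt n}{\min_{1\le i\le N}\epsilon_i}\|x-y\|.$$
   Context: $C_m(x,\rho)=\{y\in\mathbb R^m:\|y-x\|_\infty\le\rho\}$ is the cube centered at $x$ with edge length $2\rho$ and edges along the coordinate axes; $\|\cdot\|$ is the Euclidean norm. *)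

theory Defs
  imports "HOL-Analysis.Analysis"
begin

text \<open>Coordinates of R^n are indexed by the finite type 'n; the map blk assigns each
coordinate to its block i < N, so n_i = card {j. blk j = i} and n = CARD('n).
The product of cubes prod_i C_{n_i}(0, eps_i) is the set of z with
abs (z $ j) <= eps (blk j) for every coordinate j.\<close>

definition cube_product :: "('n::finite \<Rightarrow> nat) \<Rightarrow> (nat \<Rightarrow> real) \<Rightarrow> (real^'n) set" where
  "cube_product blk eps = {z. \<forall>j. \<bar>z $ j\<bar> \<le> eps (blk j)}"

definition cube_density ::
  "('n::finite \<Rightarrow> nat) \<Rightarrow> nat \<Rightarrow> (nat \<Rightarrow> real) \<Rightarrow> real^'n \<Rightarrow> real" where
  "cube_density blk N eps z =
     (if z \<in> cube_product blk eps
      then 1 / (2 ^ CARD('n) * (\<Prod>i<N. eps i ^ card {j. blk j = i}))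
      else 0)"

end

theory Submission
  imports Defs
begin

text \<open>Both densities are the normalised indicator of a box with half-widths \<open>e\<^sub>j\<close>, centred at
  \<open>x\<close> resp. \<open>y\<close>. The \<open>L\<^sup>1\<close> distance of two such indicators is twice the volume outside
  the overlap box, whose side lengths are \<open>2e\<^sub>j - \<bar>x\<^sub>j - y\<^sub>j\<bar>\<close>. After normalisation this is
  \<open>2(1 - \<Prod>\<^sub>j (1 - a\<^sub>j)) \<le> 2 \<Sum>\<^sub>j a\<^sub>j\<close> with \<open>a\<^sub>j = \<bar>x\<^sub>j - y\<^sub>j\<bar> / (2e\<^sub>j)\<close>, and Cauchy-Schwarz
  turns \<open>\<Sum>\<^sub>j \<bar>x\<^sub>j - y\<^sub>j\<bar>\<close> into \<open>\<surd>n \<parallel>x - y\<parallel>\<close>.\<close>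

lemma one_minus_prod_le_sum:
  fixes a :: "'a \<Rightarrow> real"
  assumes "finite S" "\<And>j. j \<in> S \<Longrightarrow> 0 \<le> a j \<and> a j \<le> 1"
  shows "1 - (\<Prod>j\<in>S. 1 - a j) \<le> (\<Sum>j\<in>S. a j)"
  using assms
proof (induction S rule: finite_induct)
  case empty
  then show ?case by simp
next
  case (insert k S)
  let ?P = "\<Prod>j\<in>S. 1 - a j"
  have P: "0 \<le> ?P" "?P \<le> 1" using insert by (auto intro: prod_nonneg prod_le_1)
  have ak: "0 \<le> a k" "a k \<le> 1" using insert by auto
  have IH: "1 - ?P \<le> (\<Sum>j\<in>S. a j)" using insert by auto
  have "1 - (\<Prod>j\<in>insert k S. 1 - a j) = (1 - ?P) + a k * ?P"
    using insert by (simp add: algebra_simps)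
  also have "\<dots> \<le> (\<Sum>j\<in>S. a j) + a k"
    using IH ak P by (smt (verit) mult_left_le)
  finally show ?case using insert by simp
qed

lemma sum_abs_le_sqrt_card_norm:
  fixes d :: "real^'n::finite"
  shows "(\<Sum>j\<in>UNIV. \<bar>d $ j\<bar>) \<le> sqrt (real CARD('n)) * norm d"
proof -
  let ?a = "\<chi> j. \<bar>d $ j\<bar>"
  let ?o = "(\<chi> j. 1) :: real^'n"
  have "(\<Sum>j\<in>UNIV. \<bar>d $ j\<bar>) = ?a \<bullet> ?o" by (simp add: inner_vec_def)
  also have "\<dots> \<le> norm ?a * norm ?o"
    by (rule order_trans[OF abs_ge_self Cauchy_Schwarz_ineq2])
  also have "\<dots> = norm d * sqrt (real CARD('n))"
    by (simp add: norm_vec_def L2_set_def)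
  finally show ?thesis by (simp add: mult.commute)
qed

lemma integral_abs_diff_indicator:
  assumes "A \<in> sets M" "B \<in> sets M" "emeasure M A < \<infinity>" "emeasure M B < \<infinity>"
  shows "(LINT u|M. \<bar>indicator A u - indicator B u\<bar> :: real)
           = measure M A + measure M B - 2 * measure M (A \<inter> B)"
proof -
  have AB: "emeasure M (A \<inter> B) < \<infinity>"
    using assms by (meson Int_lower1 emeasure_mono le_less_trans)
  have "(\<lambda>u. \<bar>indicator A u - indicator B u\<bar> :: real)
          = (\<lambda>u. indicator A u + indicator B u - 2 * indicator (A \<inter> B) u)"
    by (auto simp: indicator_def)
  moreover have "integrable M (indicator S :: _ \<Rightarrow> real)"
    if "S \<in> sets M" "emeasure M S < \<infinity>" for S
    using that by (intro integrable_real_indicator) auto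
  ultimately show ?thesis
    using assms AB by simp
qed

lemma measure_cbox_centered_cart:
  fixes x e :: "real^'n::finite"
  assumes "\<And>j. 0 \<le> e $ j"
  shows "measure lborel (cbox (x - e) (x + e)) = (\<Prod>j\<in>UNIV. 2 * e $ j)"
proof -
  have "x \<in> cbox (x - e) (x + e)" using assms by (simp add: mem_box_cart)
  then show ?thesis by (subst content_cbox_cart) auto
qed

lemma measure_cbox_centered_Int_cart:
  fixes x y e :: "real^'n::finite"
  assumes "\<And>j. \<bar>(x - y) $ j\<bar> \<le> 2 * e $ j"
  shows "measure lborel (cbox (x - e) (x + e) \<inter> cbox (y - e) (y + e))
           = (\<Prod>j\<in>UNIV. 2 * e $ j - \<bar>(x - y) $ j\<bar>)"
proof -
  define lo :: "real^'n" where "lo = (\<chi> j. max (x $ j) (y $ j) - e $ j)"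
  define hi :: "real^'n" where "hi = (\<chi> j. min (x $ j) (y $ j) + e $ j)"
  have overlap: "cbox (x - e) (x + e) \<inter> cbox (y - e) (y + e) = cbox lo hi"
    unfolding set_eq_iff Int_iff mem_box_cart all_conj_distrib[symmetric]
    by (intro allI iff_allI) (auto simp: lo_def hi_def)
  have "lo $ j \<le> hi $ j" for j
    using assms[of j] by (auto simp: lo_def hi_def abs_le_iff)
  then have "lo \<in> cbox lo hi"
    by (simp add: mem_box_cart)
  moreover have "hi $ j - lo $ j = 2 * e $ j - \<bar>(x - y) $ j\<bar>" for j
    by (simp add: lo_def hi_def max_def min_def)
  ultimately show ?thesis
    unfolding overlap by (subst content_cbox_cart) auto
qed

lemma integral_abs_diff_cbox_indicator_le:
  fixes x y e :: "real^'n::finite"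
  assumes e_pos: "\<And>j. 0 < e $ j"
  shows "(LINT u|lborel. \<bar>indicator (cbox (x - e) (x + e)) u - indicator (cbox (y - e) (y + e)) u\<bar>)
           \<le> (\<Prod>j\<in>UNIV. 2 * e $ j) * (\<Sum>j\<in>UNIV. \<bar>(x - y) $ j\<bar> / e $ j)"
proof -
  let ?V = "\<Prod>j\<in>UNIV. 2 * e $ j"
  let ?d = "x - y"
  have V_pos: "0 < ?V" using e_pos by (simp add: prod_pos)
  have "(LINT u|lborel. \<bar>indicator (cbox (x - e) (x + e)) u - indicator (cbox (y - e) (y + e)) u\<bar>)
          = 2 * ?V - 2 * measure lborel (cbox (x - e) (x + e) \<inter> cbox (y - e) (y + e))"
    using e_pos
    by (subst integral_abs_diff_indicator)
       (auto simp: emeasure_lborel_cbox_finite[unfolded infinity_ennreal_def] less_imp_le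
                   measure_cbox_centered_cart)
  also have "\<dots> \<le> ?V * (\<Sum>j\<in>UNIV. \<bar>?d $ j\<bar> / e $ j)"
  proof (cases "\<forall>j. \<bar>?d $ j\<bar> \<le> 2 * e $ j")
    case True
    define a where "a j = \<bar>?d $ j\<bar> / (2 * e $ j)" for j
    have a01: "0 \<le> a j \<and> a j \<le> 1" for j
      using True e_pos[of j] by (simp add: a_def)
    have "measure lborel (cbox (x - e) (x + e) \<inter> cbox (y - e) (y + e))
            = (\<Prod>j\<in>UNIV. 2 * e $ j - \<bar>?d $ j\<bar>)"
      using True by (simp add: measure_cbox_centered_Int_cart)
    also have "\<dots> = (\<Prod>j\<in>UNIV. 2 * e $ j * (1 - a j))"
      using e_pos by (intro prod.cong refl) (simp add: a_def field_simps less_imp_neq[symmetric])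
    also have "\<dots> = ?V * (\<Prod>j\<in>UNIV. 1 - a j)"
      by (simp add: prod.distrib)
    finally have "2 * ?V - 2 * measure lborel (cbox (x - e) (x + e) \<inter> cbox (y - e) (y + e))
                    = ?V * (2 * (1 - (\<Prod>j\<in>UNIV. 1 - a j)))"
      by (simp add: algebra_simps)
    also have "\<dots> \<le> ?V * (2 * (\<Sum>j\<in>UNIV. a j))"
      using V_pos a01 one_minus_prod_le_sum[of UNIV a] by simp
    also have "\<dots> = ?V * (\<Sum>j\<in>UNIV. \<bar>?d $ j\<bar> / e $ j)"
      by (simp add: a_def sum_distrib_left)
    finally show ?thesis .
  next
    case False
    then obtain k where k: "2 * e $ k < \<bar>?d $ k\<bar>" by (auto simp: not_le)
    have "2 \<le> \<bar>?d $ k\<bar> / e $ k"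
      using k e_pos[of k] by (simp add: field_simps)
    also have "\<dots> \<le> (\<Sum>j\<in>UNIV. \<bar>?d $ j\<bar> / e $ j)"
      using e_pos by (intro member_le_sum) (auto simp: less_imp_le)
    finally have "2 * ?V \<le> ?V * (\<Sum>j\<in>UNIV. \<bar>?d $ j\<bar> / e $ j)"
      using V_pos by (simp add: mult.commute)
    then show ?thesis
      using measure_nonneg[of lborel "cbox (x - e) (x + e) \<inter> cbox (y - e) (y + e)"] by linarith
  qed
  finally show ?thesis .
qed

lemma cube_density_translate_eq_indicator:
  fixes blk :: "'n::finite \<Rightarrow> nat" and eps :: "nat \<Rightarrow> real" and z u :: "real^'n"
  assumes "range blk = {..<N}"
  defines "e \<equiv> \<chi> j. eps (blk j)"
  shows "cube_density blk N eps (u - z)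
           = indicator (cbox (z - e) (z + e)) u / (\<Prod>j\<in>UNIV. 2 * e $ j)"
proof -
  have "(\<Prod>j\<in>UNIV. e $ j) = (\<Prod>i<N. \<Prod>j\<in>{j. j \<in> UNIV \<and> blk j = i}. e $ j)"
    using assms by (intro prod.group[symmetric]) auto
  also have "\<dots> = (\<Prod>i<N. eps i ^ card {j. blk j = i})"
    by (simp add: e_def)
  finally have "(\<Prod>j\<in>UNIV. 2 * e $ j) = 2 ^ CARD('n) * (\<Prod>i<N. eps i ^ card {j. blk j = i})"
    by (simp add: prod.distrib)
  moreover have "(u - z \<in> cube_product blk eps) = (u \<in> cbox (z - e) (z + e))"
    unfolding cube_product_def mem_box_cart by (auto simp: e_def abs_le_iff algebra_simps)
  ultimately show ?thesis
    unfolding cube_density_def by (simp add: indicator_def)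
qed

theorem lemma8:
  fixes blk :: "'n::finite \<Rightarrow> nat" and N :: nat and eps :: "nat \<Rightarrow> real"
    and x y :: "real^'n"
  assumes blocks: "range blk = {..<N}"
    and eps_pos: "\<forall>i<N. eps i > 0"
  shows "(LINT u|lborel. \<bar>cube_density blk N eps (u - x) - cube_density blk N eps (u - y)\<bar>)
           \<le> sqrt (real CARD('n)) / Min (eps ` {..<N}) * norm (x - y)"
proof -
  define e :: "real^'n" where "e = (\<chi> j. eps (blk j))"
  define m where "m = Min (eps ` {..<N})"
  let ?V = "\<Prod>j\<in>UNIV. 2 * e $ j"
  have blk_lt: "blk j < N" for j using blocks by auto
  have e_pos: "0 < e $ j" for j using eps_pos blk_lt by (simp add: e_def)
  have V_pos: "0 < ?V" using e_pos by (simp add: prod_pos)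
  have m_le: "m \<le> e $ j" for j unfolding m_def e_def using blk_lt by (intro Min_le) auto
  have m_pos: "0 < m"
    unfolding m_def using eps_pos blk_lt by (subst Min_gr_iff) auto
  have "(LINT u|lborel. \<bar>cube_density blk N eps (u - x) - cube_density blk N eps (u - y)\<bar>)
          = (LINT u|lborel. \<bar>indicator (cbox (x - e) (x + e)) u - indicator (cbox (y - e) (y + e)) u\<bar>) / ?V"
    using V_pos by (simp add: cube_density_translate_eq_indicator[OF blocks] e_def
                              diff_divide_distrib[symmetric])
  also have "\<dots> \<le> (\<Sum>j\<in>UNIV. \<bar>(x - y) $ j\<bar> / e $ j)"
    using integral_abs_diff_cbox_indicator_le[of e x y] e_pos V_pos
    by (simp add: divide_le_eq mult.commute)
  also have "\<dots> \<le> (\<Sum>j\<in>UNIV. \<bar>(x - y) $ j\<bar>) / m"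
    unfolding sum_divide_distrib using e_pos m_pos m_le by (intro sum_mono divide_left_mono) auto
  also have "\<dots> \<le> sqrt (real CARD('n)) / m * norm (x - y)"
    using sum_abs_le_sqrt_card_norm[of "x - y"] m_pos by (simp add: divide_right_mono)
  finally show ?thesis by (simp add: m_def)
qed

end
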